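(* Let $(\Sigma,\theta)$ be a topological space, let $G(X)=\{\star\}+\Sigma\times X$ on $\mathbf{Set}$, whose initial algebra is $\Sigma^*$ with $\delta(\star)=\varepsilon$ and $\delta(a,w)=aw$, and let $T$ be its lift to $\mathbf{Top}$ given by $T(X)=\{\star\}+\Sigma\times X$ with the coproduct and product topologies. Then the divisibility topology on $\Sigma^*$ associated to $G$ (and $T$) is the subword topology on $\Sigma^*$.
   Context: For an analytic functor $G$ with initial algebra $(\mu G,\delta)$, $\mathrm{supp}(y)$ for $y\in G(Y)$ is the image $f(X)$ of a weak normal form $f:(X,x)\to(Y,y)$ in the category of elements of $G$; for this $G$, $\mathrm{supp}(a,w)=\{w\}$ and $\mathrm{supp}(\star)=\emptyset$. The substructure ordering $\sqsubseteq$ on $\mu G$ is the reflexive–transitive closure of "$a\in\mathrm{supp}(\delta^{-1}(b))$" (here: the suffix ordering). The divisibility topology is the least fixed point of the map sending a topology $\tau$ on $\mu G$ to the topology generated by $\{\uparrow_\sqsubseteq\delta(V):V\text{ open in }T(\mu G,\tau)\}$. The subword topology on $\Sigma^*$ is generated by the sets $\Sigma^*U_1\Sigma^*\cdots\Sigma^*U_n\Sigma^*$ with $U_i\in\theta$. *)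

theory Defs
  imports "HOL-Analysis.Analysis"
begin

text \<open>The functor G(X) = {*} + Sigma x X is rendered with the option type:
  None is the point *, Some (a, x) is the element (a, x) of Sigma x X.
  Its initial algebra is the type of lists ('a list) with structure map delta.\<close>

fun delta :: "('a \<times> 'a list) option \<Rightarrow> 'a list" where
  "delta None = []"
| "delta (Some (a, w)) = a # w"

fun supp :: "('a \<times> 'b) option \<Rightarrow> 'b set" where
  "supp None = {}"
| "supp (Some (a, w)) = {w}"

text \<open>Substructure ordering: reflexive-transitive closure of
  a \<in> supp (delta^{-1} b); delta is bijective, delta^{-1} b = the unique preimage.\<close>
definition substr :: "'a list \<Rightarrow> 'a list \<Rightarrow> bool" where
  "substr = (\<lambda>a b. \<exists>x. delta x = b \<and> a \<in> supp x)\<^sup>*\<^sup>*"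

definition upclose :: "'a list set \<Rightarrow> 'a list set" where
  "upclose S = {b. \<exists>a\<in>S. substr a b}"

text \<open>The lift T to Top: T(X) = {*} + Sigma x X with the coproduct topology
  of the one-point space and the product topology.\<close>
definition Ttop :: "'a topology \<Rightarrow> 'b topology \<Rightarrow> ('a \<times> 'b) option topology" where
  "Ttop \<theta> \<tau> = topology (\<lambda>U. U \<subseteq> insert None (Some ` (topspace \<theta> \<times> topspace \<tau>)) \<and>
                         openin (prod_topology \<theta> \<tau>) {p. Some p \<in> U})"

definition Phi :: "'a topology \<Rightarrow> 'a list topology \<Rightarrow> 'a list topology" where
  "Phi \<theta> \<tau> = topology_generated_by {upclose (delta ` V) | V. openin (Ttop \<theta> \<tau>) V}"

definition coarser :: "'b topology \<Rightarrow> 'b topology \<Rightarrow> bool" where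
  "coarser \<tau>1 \<tau>2 \<longleftrightarrow> (\<forall>S. openin \<tau>1 S \<longrightarrow> openin \<tau>2 S)"

definition is_least_fixed_point :: "('b topology \<Rightarrow> 'b topology) \<Rightarrow> 'b topology \<Rightarrow> bool" where
  "is_least_fixed_point F \<tau> \<longleftrightarrow> F \<tau> = \<tau> \<and> (\<forall>\<sigma>. F \<sigma> = \<sigma> \<longrightarrow> coarser \<tau> \<sigma>)"

definition is_divisibility_topology :: "'a topology \<Rightarrow> 'a list topology \<Rightarrow> bool" where
  "is_divisibility_topology \<theta> \<tau> \<longleftrightarrow> is_least_fixed_point (Phi \<theta>) \<tau>"

text \<open>The language Sigma* U1 Sigma* ... Sigma* Un Sigma*.\<close>
fun subword_lang :: "'a set list \<Rightarrow> 'a list set" where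
  "subword_lang [] = UNIV"
| "subword_lang (U # Us) = {u @ [a] @ v | u a v. a \<in> U \<and> v \<in> subword_lang Us}"

definition subword_topology :: "'a topology \<Rightarrow> 'a list topology" where
  "subword_topology \<theta> =
     topology_generated_by {subword_lang Us | Us. \<forall>U\<in>set Us. openin \<theta> U}"

end

theory Submission
  imports Defs
begin

text \<open>Since the substructure order is the suffix order, the up-closure of \<open>\<delta>(U \<times> O)\<close> is the
  language \<open>\<Sigma>\<^sup>*UO\<close>, and the up-closure of \<open>\<delta>{\<star>}\<close> is \<open>\<Sigma>\<^sup>*\<close>. Hence \<open>\<Phi>(\<sigma>)\<close> is generated by
  \<open>\<Sigma>\<^sup>*\<close> and the sets \<open>\<Sigma>\<^sup>*UO\<close> with \<open>U\<close> open in \<open>\<theta>\<close> and \<open>O\<close> open in \<open>\<sigma>\<close>. By induction on \<open>n\<close>,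
  every fixed point of \<open>\<Phi>\<close> contains \<open>\<Sigma>\<^sup>*U\<^sub>1\<Sigma>\<^sup>*\<cdots>\<Sigma>\<^sup>*U\<^sub>n\<Sigma>\<^sup>*\<close>, so it is finer than the subword
  topology. The subword topology is itself a fixed point: it is coarser than its image because
  \<open>\<Sigma>\<^sup>*U\<^sub>1(\<Sigma>\<^sup>*U\<^sub>2\<cdots>\<Sigma>\<^sup>*)\<close> is a generator of the image, and finer because the basic sets
  containing a fixed word form a neighbourhood base, so every point of \<open>\<Sigma>\<^sup>*\<delta>(W)\<close>, \<open>W\<close> open,
  has a basic neighbourhood \<open>\<Sigma>\<^sup>*U\<^sub>1\<Sigma>\<^sup>*U\<^sub>2\<cdots>\<close> inside it.\<close>

abbreviation open_pattern :: "'a topology \<Rightarrow> 'a set list \<Rightarrow> bool" where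
  "open_pattern \<theta> Us \<equiv> \<forall>U\<in>set Us. openin \<theta> U"

lemma coarser_topology_generated_by_iff:
  "coarser (topology_generated_by B) \<sigma> \<longleftrightarrow> (\<forall>S\<in>B. openin \<sigma> S)"
  unfolding coarser_def openin_topology_generated_by_iff
  by (metis generate_topology_on.Basis generate_topology_on_coarsest istopology_openin)

lemma substr_iff_suffix: "substr a b \<longleftrightarrow> (\<exists>u. b = u @ a)"
proof
  assume "substr a b"
  then show "\<exists>u. b = u @ a"
    unfolding substr_def
  proof (induction rule: rtranclp_induct)
    case (step y z)
    then obtain x where "delta x = z" "y \<in> supp x" by blast
    with step.IH show ?case by (cases x) auto
  qed simp
next
  assume "\<exists>u. b = u @ a"
  then obtain u where b: "b = u @ a" by blast
  have "substr a (u @ a)"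
  proof (induction u)
    case (Cons c u)
    have "(\<lambda>a b. \<exists>x. delta x = b \<and> a \<in> supp x) (u @ a) (c # u @ a)"
      by (rule exI[of _ "Some (c, u @ a)"]) simp
    with Cons.IH show ?case
      unfolding substr_def by (simp add: rtranclp.rtrancl_into_rtrancl)
  qed (simp add: substr_def)
  with b show "substr a b" by simp
qed

lemma upclose_eq: "upclose S = {u @ s | u s. s \<in> S}"
  by (auto simp: upclose_def substr_iff_suffix)

lemma upclose_mono: "S \<subseteq> T \<Longrightarrow> upclose S \<subseteq> upclose T"
  by (auto simp: upclose_def)

lemma upclose_UNIV: "[] \<in> S \<Longrightarrow> upclose S = UNIV"
  unfolding upclose_eq by (blast intro: append_Nil2[symmetric])

lemma openin_Ttop:
  "openin (Ttop \<theta> \<tau>) V \<longleftrightarrow>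
     V \<subseteq> insert None (Some ` (topspace \<theta> \<times> topspace \<tau>)) \<and>
     openin (prod_topology \<theta> \<tau>) {p. Some p \<in> V}"
proof -
  have Int: "{p. Some p \<in> S \<inter> T} = {p. Some p \<in> S} \<inter> {p. Some p \<in> T}"
    for S T :: "('a \<times> 'b) option set" by auto
  have Union: "{p. Some p \<in> \<Union>K} = (\<Union>S\<in>K. {p. Some p \<in> S})"
    for K :: "('a \<times> 'b) option set set" by auto
  have "istopology (\<lambda>V. V \<subseteq> insert None (Some ` (topspace \<theta> \<times> topspace \<tau>)) \<and>
                         openin (prod_topology \<theta> \<tau>) {p. Some p \<in> V})"
    unfolding istopology_def Int Union by auto
  then show ?thesis
    unfolding Ttop_def by simp
qed

lemma openin_Ttop_None: "openin (Ttop \<theta> \<tau>) {None}"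
  by (simp add: openin_Ttop)

lemma openin_Ttop_Some_Times:
  assumes "openin \<theta> U" "openin \<tau> L"
  shows "openin (Ttop \<theta> \<tau>) (Some ` (U \<times> L))"
proof -
  have "{p. Some p \<in> Some ` (U \<times> L)} = U \<times> L" by auto
  with assms show ?thesis
    using openin_subset[OF assms(1)] openin_subset[OF assms(2)]
    by (auto simp: openin_Ttop openin_prod_Times_iff)
qed

lemma openin_Phi_upclose: "openin (Ttop \<theta> \<tau>) V \<Longrightarrow> openin (Phi \<theta> \<tau>) (upclose (delta ` V))"
  unfolding Phi_def by (rule topology_generated_by_Basis) blast

lemma openin_Phi_UNIV: "openin (Phi \<theta> \<tau>) UNIV"
proof -
  have "upclose (delta ` {None}) = UNIV"
    by (auto simp: upclose_eq)
  then show ?thesis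
    using openin_Phi_upclose[OF openin_Ttop_None] by metis
qed

lemma upclose_delta_Some_Times:
  "upclose (delta ` Some ` (U \<times> L)) = {u @ [a] @ v | u a v. a \<in> U \<and> v \<in> L}"
  by (auto simp: upclose_eq image_iff)

lemma openin_Phi_subword_lang_Cons:
  assumes "openin \<theta> U" "openin \<tau> (subword_lang Us)"
  shows "openin (Phi \<theta> \<tau>) (subword_lang (U # Us))"
  using openin_Phi_upclose[OF openin_Ttop_Some_Times[OF assms]]
  by (simp add: upclose_delta_Some_Times)

lemma append_in_subword_lang: "v \<in> subword_lang Us \<Longrightarrow> p @ v \<in> subword_lang Us"
  by (cases Us) (auto, metis append.assoc)

lemma Cons_in_subword_lang_Cons:
  "x \<in> U \<Longrightarrow> w \<in> subword_lang Us \<Longrightarrow> x # w \<in> subword_lang (U # Us)"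
  by (auto intro!: exI[of _ "[]"])

lemma Cons_in_subword_lang_Cons_iff:
  "x # w \<in> subword_lang (U # Us) \<longleftrightarrow>
     x \<in> U \<and> w \<in> subword_lang Us \<or> w \<in> subword_lang (U # Us)"
proof
  assume "x # w \<in> subword_lang (U # Us)"
  then obtain u a v where "x # w = u @ [a] @ v" "a \<in> U" "v \<in> subword_lang Us" by auto
  then show "x \<in> U \<and> w \<in> subword_lang Us \<or> w \<in> subword_lang (U # Us)"
    by (cases u) auto
next
  assume "x \<in> U \<and> w \<in> subword_lang Us \<or> w \<in> subword_lang (U # Us)"
  then show "x # w \<in> subword_lang (U # Us)"
  proof
    assume "x \<in> U \<and> w \<in> subword_lang Us"
    then show ?thesis by (blast intro: Cons_in_subword_lang_Cons)
  next
    assume "w \<in> subword_lang (U # Us)"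
    then show ?thesis
      using append_in_subword_lang[of w "U # Us" "[x]"] by (simp only: append_Cons append_Nil)
  qed
qed

lemma Nil_in_subword_lang_iff: "[] \<in> subword_lang Us \<longleftrightarrow> Us = []"
  by (cases Us) auto

lemma subword_lang_Cons_mono:
  "U \<subseteq> V \<Longrightarrow> subword_lang Us \<subseteq> subword_lang Vs \<Longrightarrow>
     subword_lang (U # Us) \<subseteq> subword_lang (V # Vs)"
  by auto blast

lemma subword_lang_Cons_subset:
  assumes "subword_lang Us \<subseteq> subword_lang Vs"
  shows "subword_lang (U # Us) \<subseteq> subword_lang Vs"
proof
  fix z assume "z \<in> subword_lang (U # Us)"
  then obtain u a v where "z = (u @ [a]) @ v" "v \<in> subword_lang Vs"
    using assms by auto
  then show "z \<in> subword_lang Vs" using append_in_subword_lang by metis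
qed

text \<open>The refinement is built letter by letter: a letter of the word used by both patterns
  gets the intersection of their open sets, a letter used by one pattern gets that pattern's set,
  and a letter used by neither is skipped.\<close>

lemma subword_lang_Int_refine:
  assumes "open_pattern \<theta> Us" "open_pattern \<theta> Vs"
    and "w \<in> subword_lang Us" "w \<in> subword_lang Vs"
  shows "\<exists>Ws. open_pattern \<theta> Ws \<and> w \<in> subword_lang Ws \<and>
           subword_lang Ws \<subseteq> subword_lang Us \<inter> subword_lang Vs"
  using assms
proof (induction w arbitrary: Us Vs)
  case Nil
  then show ?case by (auto simp: Nil_in_subword_lang_iff)
next
  case (Cons x w)
  show ?case
  proof (cases "Us = [] \<or> Vs = []")
    case True
    with Cons.prems show ?thesis by auto
  next
    case False
    then obtain U R V S where UR: "Us = U # R" and VS: "Vs = V # S"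
      by (meson list.exhaust)
    have oU: "openin \<theta> U" "open_pattern \<theta> R" and oV: "openin \<theta> V" "open_pattern \<theta> S"
      using Cons.prems(1,2) UR VS by auto
    have x_Us: "x \<in> U \<and> w \<in> subword_lang R \<or> w \<in> subword_lang Us"
      and x_Vs: "x \<in> V \<and> w \<in> subword_lang S \<or> w \<in> subword_lang Vs"
      using Cons.prems(3,4) UR VS Cons_in_subword_lang_Cons_iff by metis+
    from x_Us x_Vs show ?thesis
    proof (elim disjE conjE)
      assume "x \<in> U" "w \<in> subword_lang R" "x \<in> V" "w \<in> subword_lang S"
      moreover obtain Ws where "open_pattern \<theta> Ws" "w \<in> subword_lang Ws"
        "subword_lang Ws \<subseteq> subword_lang R \<inter> subword_lang S"
        using Cons.IH[of R S] oU oV calculation by auto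
      ultimately show ?thesis
        using oU oV unfolding UR VS
        by (intro exI[of _ "(U \<inter> V) # Ws"] conjI Int_greatest subword_lang_Cons_mono
            Cons_in_subword_lang_Cons) auto
    next
      assume "x \<in> U" "w \<in> subword_lang R" "w \<in> subword_lang Vs"
      moreover obtain Ws where "open_pattern \<theta> Ws" "w \<in> subword_lang Ws"
        "subword_lang Ws \<subseteq> subword_lang R \<inter> subword_lang Vs"
        using Cons.IH[of R Vs] oU Cons.prems(2) calculation by auto
      ultimately show ?thesis
        using oU unfolding UR
        by (intro exI[of _ "U # Ws"] conjI Int_greatest subword_lang_Cons_mono
            subword_lang_Cons_subset Cons_in_subword_lang_Cons) auto
    next
      assume "w \<in> subword_lang Us" "x \<in> V" "w \<in> subword_lang S"
      moreover obtain Ws where "open_pattern \<theta> Ws" "w \<in> subword_lang Ws"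
        "subword_lang Ws \<subseteq> subword_lang Us \<inter> subword_lang S"
        using Cons.IH[of Us S] oV Cons.prems(1) calculation by auto
      ultimately show ?thesis
        using oV unfolding VS
        by (intro exI[of _ "V # Ws"] conjI Int_greatest subword_lang_Cons_mono
            subword_lang_Cons_subset Cons_in_subword_lang_Cons) auto
    next
      assume "w \<in> subword_lang Us" "w \<in> subword_lang Vs"
      then obtain Ws where "open_pattern \<theta> Ws" "w \<in> subword_lang Ws"
        "subword_lang Ws \<subseteq> subword_lang Us \<inter> subword_lang Vs"
        using Cons.IH[of Us Vs] Cons.prems(1,2) by auto
      then show ?thesis
        using append_in_subword_lang[of w Ws "[x]"] by auto
    qed
  qed
qed

lemma openin_subword_topology_subword_lang:
  "open_pattern \<theta> Us \<Longrightarrow> openin (subword_topology \<theta>) (subword_lang Us)"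
  unfolding subword_topology_def by (rule topology_generated_by_Basis) blast

lemma coarser_subword_topology_iff:
  "coarser (subword_topology \<theta>) \<sigma> \<longleftrightarrow>
     (\<forall>Us. open_pattern \<theta> Us \<longrightarrow> openin \<sigma> (subword_lang Us))"
  unfolding subword_topology_def coarser_topology_generated_by_iff by blast

lemma subword_topology_base:
  assumes "openin (subword_topology \<theta>) L" "w \<in> L"
  shows "\<exists>Us. open_pattern \<theta> Us \<and> w \<in> subword_lang Us \<and> subword_lang Us \<subseteq> L"
proof -
  have "generate_topology_on {subword_lang Us | Us. open_pattern \<theta> Us} L"
    using assms(1) unfolding subword_topology_def openin_topology_generated_by_iff .
  then show ?thesis
    using assms(2)
  proof (induction arbitrary: w rule: generate_topology_on.induct)
    case (Int A B)
    obtain Us where Us: "open_pattern \<theta> Us" "w \<in> subword_lang Us" "subword_lang Us \<subseteq> A"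
      using Int.IH(1) Int.prems by blast
    obtain Vs where Vs: "open_pattern \<theta> Vs" "w \<in> subword_lang Vs" "subword_lang Vs \<subseteq> B"
      using Int.IH(2) Int.prems by blast
    obtain Ws where "open_pattern \<theta> Ws" "w \<in> subword_lang Ws"
      "subword_lang Ws \<subseteq> subword_lang Us \<inter> subword_lang Vs"
      using subword_lang_Int_refine[OF Us(1) Vs(1) Us(2) Vs(2)] by blast
    with Us(3) Vs(3) show ?case by blast
  next
    case (UN K)
    then obtain k where "k \<in> K" "w \<in> k" by blast
    with UN.IH[of k w] show ?case by blast
  next
    case (Basis S)
    then show ?case by blast
  qed simp
qed

lemma openin_subword_lang_if_fixed_point:
  assumes "Phi \<theta> \<sigma> = \<sigma>" "open_pattern \<theta> Us"
  shows "openin \<sigma> (subword_lang Us)"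
  using assms(2)
proof (induction Us)
  case Nil
  then show ?case using openin_Phi_UNIV[of \<theta> \<sigma>] assms(1) by simp
next
  case (Cons U Us)
  then show ?case using openin_Phi_subword_lang_Cons[of \<theta> U \<sigma> Us] assms(1) by simp
qed

lemma subword_topology_coarser_fixed_point:
  "Phi \<theta> \<sigma> = \<sigma> \<Longrightarrow> coarser (subword_topology \<theta>) \<sigma>"
  by (simp add: coarser_subword_topology_iff openin_subword_lang_if_fixed_point)

lemma subword_topology_coarser_Phi:
  "coarser (subword_topology \<theta>) (Phi \<theta> (subword_topology \<theta>))"
  unfolding coarser_subword_topology_iff
proof (intro allI impI)
  fix Us assume Us: "open_pattern \<theta> Us"
  show "openin (Phi \<theta> (subword_topology \<theta>)) (subword_lang Us)"
  proof (cases Us)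
    case Nil
    then show ?thesis by (simp add: openin_Phi_UNIV)
  next
    case (Cons U R)
    with Us have "openin \<theta> U" "open_pattern \<theta> R" by auto
    then show ?thesis
      unfolding Cons by (intro openin_Phi_subword_lang_Cons openin_subword_topology_subword_lang)
  qed
qed

lemma subword_lang_Cons_subset_upclose:
  assumes V: "openin (Ttop \<theta> (subword_topology \<theta>)) V" and aw: "Some (a, w) \<in> V"
  obtains A Us where "openin \<theta> A" "a \<in> A" "open_pattern \<theta> Us" "w \<in> subword_lang Us"
    "subword_lang (A # Us) \<subseteq> upclose (delta ` V)"
proof -
  have W: "openin (prod_topology \<theta> (subword_topology \<theta>)) {p. Some p \<in> V}"
    using V openin_Ttop by blast
  obtain A L where AL: "openin \<theta> A" "openin (subword_topology \<theta>) L" "a \<in> A" "w \<in> L"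
    "A \<times> L \<subseteq> {p. Some p \<in> V}"
    using W[unfolded openin_prod_topology_alt, rule_format, of a w] aw by auto
  obtain Us where Us: "open_pattern \<theta> Us" "w \<in> subword_lang Us" "subword_lang Us \<subseteq> L"
    using subword_topology_base[OF AL(2,4)] by blast
  have "Some ` (A \<times> subword_lang Us) \<subseteq> V"
    using AL(5) Us(3) by auto
  then have "upclose (delta ` Some ` (A \<times> subword_lang Us)) \<subseteq> upclose (delta ` V)"
    by (intro upclose_mono image_mono)
  then have "subword_lang (A # Us) \<subseteq> upclose (delta ` V)"
    by (simp add: upclose_delta_Some_Times)
  with AL(1,3) Us(1,2) show thesis by (rule that)
qed

lemma openin_subword_topology_upclose:
  assumes V: "openin (Ttop \<theta> (subword_topology \<theta>)) V"
  shows "openin (subword_topology \<theta>) (upclose (delta ` V))"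
proof (cases "None \<in> V")
  case True
  then have "upclose (delta ` V) = UNIV"
    by (metis delta.simps(1) image_eqI upclose_UNIV)
  then show ?thesis
    using openin_subword_topology_subword_lang[of "[]"] by simp
next
  case False
  show ?thesis
  proof (rule openin_subopen[THEN iffD2], intro ballI)
    fix z assume "z \<in> upclose (delta ` V)"
    then obtain u y where z: "z = u @ delta y" and y: "y \<in> V"
      unfolding upclose_eq by blast
    with False obtain a w where aw: "y = Some (a, w)"
      by (metis option.exhaust surj_pair)
    with y have "Some (a, w) \<in> V"
      by simp
    then obtain A Us where A: "openin \<theta> A" "a \<in> A" and Us: "open_pattern \<theta> Us" "w \<in> subword_lang Us"
      and sub: "subword_lang (A # Us) \<subseteq> upclose (delta ` V)"
      by (rule subword_lang_Cons_subset_upclose[OF V])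
    have "openin (subword_topology \<theta>) (subword_lang (A # Us))"
      using A(1) Us(1) by (intro openin_subword_topology_subword_lang) simp
    moreover have "z \<in> subword_lang (A # Us)"
      unfolding z aw delta.simps
      by (intro append_in_subword_lang Cons_in_subword_lang_Cons A(2) Us(2))
    ultimately show "\<exists>T. openin (subword_topology \<theta>) T \<and> z \<in> T \<and> T \<subseteq> upclose (delta ` V)"
      using sub by blast
  qed
qed

lemma Phi_coarser_subword_topology:
  "coarser (Phi \<theta> (subword_topology \<theta>)) (subword_topology \<theta>)"
  unfolding Phi_def coarser_topology_generated_by_iff
  by (auto intro: openin_subword_topology_upclose)

theorem mainTheorem16:
  fixes \<theta> :: "'a topology"
  assumes "topspace \<theta> = UNIV"
  shows "is_divisibility_topology \<theta> (subword_topology \<theta>)"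
proof -
  have "Phi \<theta> (subword_topology \<theta>) = subword_topology \<theta>"
    using subword_topology_coarser_Phi Phi_coarser_subword_topology
    unfolding topology_eq coarser_def by blast
  then show ?thesis
    unfolding is_divisibility_topology_def is_least_fixed_point_def
    using subword_topology_coarser_fixed_point by blast
qed

end
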